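(* Assume (A1) and let $i,j\in I_N$. For every $(y,x)\in J_j^*\times J_i^*$ there exists a unique $\tau=T(y,x)\in(0,1)$ such that $\mathcal{D}_{\mathrm{implicit}}^{ji}(y,x)=\mathcal{E}_1(\tau,y)+\mathcal{E}_2(\tau,x)$. Moreover, $\mathcal{D}_{\mathrm{implicit}}^{ji}$ is differentiable there with $$\partial_{x_i}\mathcal{D}_{\mathrm{implicit}}^{ji}(y,x)=L_i'\Big(\frac{x_i}{1-T(y,x)}\Big),\qquad \partial_{y_j}\mathcal{D}_{\mathrm{implicit}}^{ji}(y,x)=-L_j'\Big(-\frac{y_j}{T(y,x)}\Big).$$
   Context: Junction: fix an integer $N\ge1$ and $N$ distinct unit vectors $e_1,\dots,e_N\in\mathbb{R}^2$. Set $J_i=[0,\infty)e_i$, $J_i^*=J_i\setminus\{0\}$, $J=\bigcup_iJ_i$, $I_N=\{1,\dots,N\}$. Each $x\in J_i$ is written $x=x_ie_i$, $x_i\ge0$. For a function $f$ on $J\times J$ (variables $(y,x)$), $f^{ji}$ denotes its restriction to $J_j\times J_i$, viewed as a function of $(y_j,x_i)$. (A1): there is $\gamma>0$ with $L_i\in C^2(\mathbb{R})$, $L_i''\ge\gamma$ for each $i$. $L_0(0)=\min_jL_j(0)$. For $\tau\in[0,1]$: $\mathcal{E}_1(\tau,y)=\tau L_j(-y_j/\tau)-\tau L_0(0)$ if $y=y_je_j\ne0$, $\tau\ne0$; $\mathcal{E}_1(\tau,0)=0$; $\mathcal{E}_1(0,y)=+\infty$ if $y\ne0$. $\mathcal{E}_2(\tau,x)=(1-\tau)L_i(x_i/(1-\tau))+\tau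 L_0(0)$ if $x=x_ie_i\ne0$, $\tau\ne1$; $\mathcal{E}_2(\tau,0)=L_0(0)$; $\mathcal{E}_2(1,x)=+\infty$ if $x\ne0$. $\mathcal{D}_{\mathrm{implicit}}(y,x)=\inf_{0\le\tau\le1}\{\mathcal{E}_1(\tau,y)+\mathcal{E}_2(\tau,x)\}$. *)

theory Defs
  imports "HOL-Analysis.Analysis"
begin

text \<open>Junction with branches J_k = [0,\<infinity>) e_k, k \<in> {1..N}, e_k distinct unit vectors in R^2.
  A point y = y_k e_k of J has coordinate y_k = norm y (unit vectors).\<close>

definition branch :: "(nat \<Rightarrow> real^2) \<Rightarrow> nat \<Rightarrow> real^2 \<Rightarrow> nat" where
  "branch e N y = (THE k. k \<in> {1..N} \<and> (\<exists>t\<ge>0. y = t *\<^sub>R e k))"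

definition L00 :: "nat \<Rightarrow> (nat \<Rightarrow> real \<Rightarrow> real) \<Rightarrow> real" where
  "L00 N L = Min ((\<lambda>k. L k 0) ` {1..N})"

definition E1 :: "(nat \<Rightarrow> real^2) \<Rightarrow> nat \<Rightarrow> (nat \<Rightarrow> real \<Rightarrow> real) \<Rightarrow> real \<Rightarrow> real^2 \<Rightarrow> ereal" where
  "E1 e N L \<tau> y =
     (if y = 0 then 0
      else if \<tau> = 0 then \<infinity>
      else ereal (\<tau> * L (branch e N y) (- norm y / \<tau>) - \<tau> * L00 N L))"

definition E2 :: "(nat \<Rightarrow> real^2) \<Rightarrow> nat \<Rightarrow> (nat \<Rightarrow> real \<Rightarrow> real) \<Rightarrow> real \<Rightarrow> real^2 \<Rightarrow> ereal" where
  "E2 e N L \<tau> x =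
     (if x = 0 then ereal (L00 N L)
      else if \<tau> = 1 then \<infinity>
      else ereal ((1 - \<tau>) * L (branch e N x) (norm x / (1 - \<tau>)) + \<tau> * L00 N L))"

definition D_implicit :: "(nat \<Rightarrow> real^2) \<Rightarrow> nat \<Rightarrow> (nat \<Rightarrow> real \<Rightarrow> real) \<Rightarrow> real^2 \<Rightarrow> real^2 \<Rightarrow> ereal" where
  "D_implicit e N L y x = (INF \<tau>\<in>{0..1}. E1 e N L \<tau> y + E2 e N L \<tau> x)"

end

theory Submission
  imports Defs
begin

(* For y = a e_j and x = b e_i with a, b > 0, the quantity E1 + E2 at time tau in (0,1) is the
   transit cost  c(a,b,tau) = tau Lj(-a/tau) + (1-tau) Li(b/(1-tau)),  and it is +infinity at
   tau = 0 and tau = 1.  So D_implicit is the infimum of c(a,b,.) over the open interval (0,1).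
   1. A function with second derivative >= gamma is gamma-strongly convex; then its perspective
      (t,u) |-> t f(u/t) is jointly convex with an explicit quadratic gain.  Hence c is
      midpoint convex in (a,b,tau) jointly, strictly in tau when a > 0: minimisers are unique.
   2. The strong convexity bound below the tangent at 0 makes c blow up at both ends of (0,1);
      with continuity a minimiser exists.  This defines the transit time T(a,b) and the optimal
      cost V(a,b) = c(a,b,T(a,b)) = D_implicit.
   3. V is midpoint convex (by 1) and lies below the smooth function c(.,.,T(s,r)), touching it
      at (s,r).  A midpoint convex function touched from above by a differentiable function is
      differentiable there with the same derivative (an envelope argument), which gives the
      derivative formula. *)

(* A second derivative bounded below by gamma makes f gamma-strongly convex, i.e.
   f - gamma/2 z^2 is convex; all later estimates only use this form. *)
lemma convex_of_second_derivative_ge: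
  fixes f f' f'' :: "real \<Rightarrow> real"
  assumes f': "\<And>z. (f has_real_derivative f' z) (at z)"
    and f'': "\<And>z. (f' has_real_derivative f'' z) (at z)"
    and ge: "\<And>z. f'' z \<ge> \<gamma>"
  shows "convex_on UNIV (\<lambda>z. f z - \<gamma>/2 * z\<^sup>2)"
proof (rule convex_on_realI[where f'="\<lambda>z. f' z - \<gamma> * z"])
  fix x :: real
  show "((\<lambda>z. f z - \<gamma>/2 * z\<^sup>2) has_real_derivative f' x - \<gamma> * x) (at x)"
    using f' by (auto intro!: derivative_eq_intros)
next
  fix x y :: real assume "x \<le> y"
  then show "f' x - \<gamma> * x \<le> f' y - \<gamma> * y"
  proof (rule DERIV_nonneg_imp_nondecreasing)
    fix z :: real
    have "((\<lambda>z. f' z - \<gamma> * z) has_real_derivative f'' z - \<gamma>) (at z)"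
      using f'' by (auto intro!: derivative_eq_intros)
    then show "\<exists>d. ((\<lambda>z. f' z - \<gamma> * z) has_real_derivative d) (at z) \<and> 0 \<le> d"
      using ge[of z] by auto
  qed
qed simp

lemma strongly_convex_combination:
  fixes f :: "real \<Rightarrow> real"
  assumes cvx: "convex_on UNIV (\<lambda>z. f z - \<gamma>/2 * z\<^sup>2)" and u: "0 \<le> u" "u \<le> 1"
  shows "f (u*a + (1-u)*b) \<le> u * f a + (1-u) * f b - \<gamma>/2 * u*(1-u)*(a-b)\<^sup>2"
proof -
  define m where "m = u*a + (1-u)*b"
  have "f m - \<gamma>/2 * m\<^sup>2 \<le> u * (f a - \<gamma>/2 * a\<^sup>2) + (1-u) * (f b - \<gamma>/2 * b\<^sup>2)"
    using convex_onD[OF cvx, of "1-u" a b] u by (simp add: m_def)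
  moreover have "u * (f a - \<gamma>/2 * a\<^sup>2) = u * f a - \<gamma>/2 * (u * a\<^sup>2)"
    and "(1-u) * (f b - \<gamma>/2 * b\<^sup>2) = (1-u) * f b - \<gamma>/2 * ((1-u) * b\<^sup>2)"
    by (simp_all add: right_diff_distrib mult.left_commute)
  ultimately have cv: "f m - \<gamma>/2 * m\<^sup>2 \<le> u * f a - \<gamma>/2 * (u * a\<^sup>2) + ((1-u) * f b - \<gamma>/2 * ((1-u) * b\<^sup>2))"
    by simp
  have sq: "m\<^sup>2 = u*a\<^sup>2 + (1-u)*b\<^sup>2 - u*(1-u)*(a-b)\<^sup>2"
    by (simp add: m_def power2_eq_square algebra_simps)
  have "\<gamma>/2 * m\<^sup>2 = \<gamma>/2 * (u*a\<^sup>2) + \<gamma>/2 * ((1-u)*b\<^sup>2) - \<gamma>/2 * u*(1-u)*(a-b)\<^sup>2"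
    by (simp only: sq) (simp add: field_simps)
  with cv show ?thesis unfolding m_def by linarith
qed

lemma strongly_convex_above_tangent:
  fixes f :: "real \<Rightarrow> real"
  assumes cvx: "convex_on UNIV (\<lambda>z. f z - \<gamma>/2 * z\<^sup>2)"
    and f': "(f has_real_derivative d) (at 0)"
  shows "f z \<ge> f 0 + d * z + \<gamma>/2 * z\<^sup>2"
proof -
  have "((\<lambda>z. f z - \<gamma>/2 * z\<^sup>2) has_real_derivative d) (at 0)"
    using f' by (auto intro!: derivative_eq_intros)
  from convex_on_imp_above_tangent[OF cvx _ _ _ this, of z] show ?thesis by simp
qed

lemma strongly_convex_perspective:
  fixes f :: "real \<Rightarrow> real"
  assumes cvx: "convex_on UNIV (\<lambda>z. f z - \<gamma>/2 * z\<^sup>2)" and t: "t1 > 0" "t2 > 0"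
  shows "(t1+t2) * f ((u1+u2)/(t1+t2)) + \<gamma>/2 * (t1*t2/(t1+t2)) * (u1/t1 - u2/t2)\<^sup>2
           \<le> t1 * f (u1/t1) + t2 * f (u2/t2)"
proof -
  define w where "w = t1/(t1+t2)"
  have w: "0 \<le> w" "w \<le> 1" "1 - w = t2/(t1+t2)" using t by (auto simp: w_def field_simps)
  have "w*(u1/t1) = u1/(t1+t2)" "(1-w)*(u2/t2) = u2/(t1+t2)"
    using t unfolding w(3) by (simp_all add: w_def)
  then have mid: "w*(u1/t1) + (1-w)*(u2/t2) = (u1+u2)/(t1+t2)"
    by (simp add: add_divide_distrib)
  have "f ((u1+u2)/(t1+t2)) \<le> w * f (u1/t1) + (1-w) * f (u2/t2) - \<gamma>/2 * w*(1-w)*(u1/t1 - u2/t2)\<^sup>2"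
    using strongly_convex_combination[OF cvx w(1,2), of "u1/t1" "u2/t2"] mid by simp
  then have "(t1+t2) * f ((u1+u2)/(t1+t2))
      \<le> (t1+t2) * (w * f (u1/t1) + (1-w) * f (u2/t2) - \<gamma>/2 * w*(1-w)*(u1/t1 - u2/t2)\<^sup>2)"
    using t by (intro mult_left_mono) auto
  also have "\<dots> = t1 * f (u1/t1) + t2 * f (u2/t2) - \<gamma>/2 * (t1*t2/(t1+t2)) * (u1/t1 - u2/t2)\<^sup>2"
  proof -
    have "(t1+t2) * (w * f (u1/t1)) = t1 * f (u1/t1)"
      and "(t1+t2) * ((1-w) * f (u2/t2)) = t2 * f (u2/t2)"
      using t unfolding w(3) by (simp_all add: w_def)
    moreover have "(t1+t2) * (w * (1-w)) = t1*t2/(t1+t2)"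
    proof -
      have "(t1+t2) * w = t1" using t by (simp add: w_def)
      then show ?thesis unfolding w(3) by (metis mult.assoc times_divide_eq_right)
    qed
    then have "(t1+t2) * (\<gamma>/2 * w*(1-w)*(u1/t1 - u2/t2)\<^sup>2) = \<gamma>/2 * (t1*t2/(t1+t2)) * (u1/t1 - u2/t2)\<^sup>2"
      by (metis mult.assoc mult.left_commute)
    ultimately show ?thesis by (simp only: distrib_left right_diff_distrib)
  qed
  finally show ?thesis by simp
qed

lemma perspective_above_tangent:
  fixes f :: "real \<Rightarrow> real"
  assumes cvx: "convex_on UNIV (\<lambda>z. f z - \<gamma>/2 * z\<^sup>2)"
    and f': "(f has_real_derivative d) (at 0)" and w: "w > 0"
  shows "w * f 0 + d * u + \<gamma>/2 * u\<^sup>2 / w \<le> w * f (u/w)"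
proof -
  have "w * (f 0 + d * (u/w) + \<gamma>/2 * (u/w)\<^sup>2) \<le> w * f (u/w)"
    using strongly_convex_above_tangent[OF cvx f', of "u/w"] w by (intro mult_left_mono) auto
  moreover have "w * (f 0 + d * (u/w) + \<gamma>/2 * (u/w)\<^sup>2) = w * f 0 + d * u + \<gamma>/2 * u\<^sup>2 / w"
    using w by (simp add: field_simps power2_eq_square)
  ultimately show ?thesis by simp
qed

lemma continuous_attains_inf_unit_interval:
  fixes f :: "real \<Rightarrow> real"
  assumes cont: "continuous_on {0<..<1} f" and \<delta>: "0 < \<delta>" "\<delta> \<le> 1/2"
    and outer: "\<And>\<tau>. \<tau> \<in> {0<..<1} \<Longrightarrow> \<tau> \<notin> {\<delta>..1-\<delta>} \<Longrightarrow> f (1/2) < f \<tau>"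
  shows "\<exists>t\<in>{0<..<1}. \<forall>\<sigma>\<in>{0<..<1}. f t \<le> f \<sigma>"
proof -
  have "continuous_on {\<delta>..1-\<delta>} f"
    using \<delta> by (intro continuous_on_subset[OF cont]) auto
  moreover have "{\<delta>..1-\<delta>} \<noteq> {}" using \<delta> by simp
  ultimately obtain t where t: "t \<in> {\<delta>..1-\<delta>}" "\<forall>\<sigma>\<in>{\<delta>..1-\<delta>}. f t \<le> f \<sigma>"
    using continuous_attains_inf[OF compact_Icc] by blast
  have half: "f t \<le> f (1/2)" using t(2) \<delta> by simp
  show ?thesis
  proof (intro bexI ballI)
    fix \<sigma> :: real assume "\<sigma> \<in> {0<..<1}"
    then show "f t \<le> f \<sigma>"
      using t(2) outer[of \<sigma>] half by (cases "\<sigma> \<in> {\<delta>..1-\<delta>}") auto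
  next
    show "t \<in> {0<..<1}" using t(1) \<delta> by simp
  qed
qed

(* The error of V is squeezed between those of phi at h and at -h. *)
lemma has_derivative_touching_above:
  fixes V \<phi> :: "'a::real_normed_vector \<Rightarrow> real"
  assumes \<phi>: "(\<phi> has_derivative \<phi>') (at p)" and \<delta>: "\<delta> > 0"
    and above: "\<And>h. norm h < \<delta> \<Longrightarrow> V (p + h) \<le> \<phi> (p + h)" and touch: "V p = \<phi> p"
    and midconvex: "\<And>h. norm h < \<delta> \<Longrightarrow> 2 * V p \<le> V (p + h) + V (p - h)"
  shows "(V has_derivative \<phi>') (at p)"
  unfolding has_derivative_at
proof
  show lin: "bounded_linear \<phi>'" using has_derivative_bounded_linear[OF \<phi>] .
  define R where "R = (\<lambda>h. norm (\<phi> (p + h) - \<phi> p - \<phi>' h) / norm h)"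
  have R: "R \<midarrow>0\<rightarrow> 0" using \<phi> unfolding has_derivative_at R_def by blast
  have "filterlim (\<lambda>h::'a. -h) (at 0) (at 0)"
    unfolding filterlim_at by (auto intro!: tendsto_eq_intros simp: eventually_at_filter)
  then have R_neg: "(\<lambda>h. R (-h)) \<midarrow>0\<rightarrow> 0" using filterlim_compose[OF R] by blast
  have bound: "norm (V (p + h) - V p - \<phi>' h) / norm h \<le> R h + R (-h)"
    if "norm h < \<delta>" for h
  proof -
    have "norm (-h) < \<delta>" using that by simp
    from above[OF this] above[OF that] midconvex[OF that]
    have "\<bar>V (p + h) - V p - \<phi>' h\<bar>
          \<le> \<bar>\<phi> (p + h) - \<phi> p - \<phi>' h\<bar> + \<bar>\<phi> (p + -h) - \<phi> p - \<phi>' (-h)\<bar>"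
      using touch linear_neg[OF bounded_linear.linear[OF lin], of h] by auto
    then have "\<bar>V (p + h) - V p - \<phi>' h\<bar> / norm h
          \<le> (\<bar>\<phi> (p + h) - \<phi> p - \<phi>' h\<bar> + \<bar>\<phi> (p + -h) - \<phi> p - \<phi>' (-h)\<bar>) / norm h"
      by (rule divide_right_mono) simp
    then show ?thesis unfolding R_def by (simp add: add_divide_distrib)
  qed
  show "(\<lambda>h. norm (V (p + h) - V p - \<phi>' h) / norm h) \<midarrow>0\<rightarrow> 0"
  proof (rule tendsto_sandwich[where f="\<lambda>h. 0" and h="\<lambda>h. R h + R (-h)"])
    show "\<forall>\<^sub>F h in at 0. norm (V (p + h) - V p - \<phi>' h) / norm h \<le> R h + R (-h)"
      unfolding eventually_at using \<delta> bound by (intro exI[of _ \<delta>]) auto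
    show "((\<lambda>h. R h + R (-h)) \<longlongrightarrow> 0) (at 0)" using tendsto_add[OF R R_neg] by simp
    show "\<forall>\<^sub>F h in at 0. 0 \<le> norm (V (p + h) - V p - \<phi>' h) / norm h" by simp
  qed simp
qed

(* Cost of the path that spends time tau reaching the junction from distance a on the
   incoming branch (Lagrangian Lj) and time 1 - tau reaching distance b on the outgoing
   branch (Lagrangian Li). *)
definition transit_cost :: "(real \<Rightarrow> real) \<Rightarrow> (real \<Rightarrow> real) \<Rightarrow> real \<Rightarrow> real \<Rightarrow> real \<Rightarrow> real" where
  "transit_cost Lj Li a b \<tau> = \<tau> * Lj (-a/\<tau>) + (1-\<tau>) * Li (b/(1-\<tau>))"

definition optimal_transit :: "(real \<Rightarrow> real) \<Rightarrow> (real \<Rightarrow> real) \<Rightarrow> real \<Rightarrow> real \<Rightarrow> real \<Rightarrow> bool" where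
  "optimal_transit Lj Li a b \<tau> \<longleftrightarrow>
     \<tau> \<in> {0<..<1} \<and> (\<forall>\<sigma>\<in>{0<..<1}. transit_cost Lj Li a b \<tau> \<le> transit_cost Lj Li a b \<sigma>)"

definition transit_time :: "(real \<Rightarrow> real) \<Rightarrow> (real \<Rightarrow> real) \<Rightarrow> real \<Rightarrow> real \<Rightarrow> real" where
  "transit_time Lj Li a b = (THE \<tau>. optimal_transit Lj Li a b \<tau>)"

definition min_transit_cost :: "(real \<Rightarrow> real) \<Rightarrow> (real \<Rightarrow> real) \<Rightarrow> real \<Rightarrow> real \<Rightarrow> real" where
  "min_transit_cost Lj Li a b = transit_cost Lj Li a b (transit_time Lj Li a b)"

locale strongly_convex_pair =
  fixes Lj Lj' Li Li' :: "real \<Rightarrow> real" and \<gamma> :: real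
  assumes \<gamma>_pos: "\<gamma> > 0"
    and Lj_deriv: "\<And>z. (Lj has_real_derivative Lj' z) (at z)"
    and Li_deriv: "\<And>z. (Li has_real_derivative Li' z) (at z)"
    and Lj_convex: "convex_on UNIV (\<lambda>z. Lj z - \<gamma>/2 * z\<^sup>2)"
    and Li_convex: "convex_on UNIV (\<lambda>z. Li z - \<gamma>/2 * z\<^sup>2)"
begin

lemma transit_cost_midpoint:
  assumes t: "t1 \<in> {0<..<1}" "t2 \<in> {0<..<1}"
  shows "2 * transit_cost Lj Li ((a1+a2)/2) ((b1+b2)/2) ((t1+t2)/2)
           + \<gamma>/2 * (t1*t2/(t1+t2)) * (a1/t1 - a2/t2)\<^sup>2
         \<le> transit_cost Lj Li a1 b1 t1 + transit_cost Lj Li a2 b2 t2"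
proof -
  have pj: "(t1+t2) * Lj ((-a1 + -a2)/(t1+t2)) + \<gamma>/2 * (t1*t2/(t1+t2)) * ((-a1)/t1 - (-a2)/t2)\<^sup>2
            \<le> t1 * Lj ((-a1)/t1) + t2 * Lj ((-a2)/t2)"
    using t by (intro strongly_convex_perspective[OF Lj_convex]) auto
  have pi: "((1-t1)+(1-t2)) * Li ((b1+b2)/((1-t1)+(1-t2)))
              + \<gamma>/2 * ((1-t1)*(1-t2)/((1-t1)+(1-t2))) * (b1/(1-t1) - b2/(1-t2))\<^sup>2
            \<le> (1-t1) * Li (b1/(1-t1)) + (1-t2) * Li (b2/(1-t2))"
    using t by (intro strongly_convex_perspective[OF Li_convex]) auto
  have "0 \<le> \<gamma>/2 * ((1-t1)*(1-t2)/((1-t1)+(1-t2))) * (b1/(1-t1) - b2/(1-t2))\<^sup>2"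
    using t \<gamma>_pos by auto
  moreover have "((-a1)/t1 - (-a2)/t2)\<^sup>2 = (a1/t1 - a2/t2)\<^sup>2"
    by (simp add: power2_eq_square algebra_simps)
  then have "\<gamma>/2 * (t1*t2/(t1+t2)) * ((-a1)/t1 - (-a2)/t2)\<^sup>2 = \<gamma>/2 * (t1*t2/(t1+t2)) * (a1/t1 - a2/t2)\<^sup>2"
    by simp
  moreover have "2 * transit_cost Lj Li ((a1+a2)/2) ((b1+b2)/2) ((t1+t2)/2)
      = (t1+t2) * Lj ((-a1 + -a2)/(t1+t2)) + ((1-t1)+(1-t2)) * Li ((b1+b2)/((1-t1)+(1-t2)))"
  proof -
    have arg_j: "- ((a1+a2)/2) / ((t1+t2)/2) = (-a1 + -a2)/(t1+t2)"
      and arg_i: "((b1+b2)/2) / (1 - (t1+t2)/2) = (b1+b2)/((1-t1)+(1-t2))"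
      using t by (auto simp: field_simps)
    show ?thesis unfolding transit_cost_def arg_j arg_i by (simp add: field_simps)
  qed
  ultimately show ?thesis using pj pi unfolding transit_cost_def by linarith
qed

(* For a > 0 the gain is positive between distinct times, so the minimiser is unique. *)
lemma optimal_transit_unique:
  assumes a: "a > 0" and t1: "optimal_transit Lj Li a b t1" and t2: "optimal_transit Lj Li a b t2"
  shows "t1 = t2"
proof (rule ccontr)
  assume ne: "t1 \<noteq> t2"
  have t: "t1 \<in> {0<..<1}" "t2 \<in> {0<..<1}" using t1 t2 by (auto simp: optimal_transit_def)
  then have mid: "(t1+t2)/2 \<in> {0<..<1}" by auto
  have "a/t1 \<noteq> a/t2" using ne a t by (auto simp: divide_simps)
  then have penalty: "\<gamma>/2 * (t1*t2/(t1+t2)) * (a/t1 - a/t2)\<^sup>2 > 0"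
    using t \<gamma>_pos by auto
  have "2 * transit_cost Lj Li a b ((t1+t2)/2) + \<gamma>/2 * (t1*t2/(t1+t2)) * (a/t1 - a/t2)\<^sup>2
        \<le> transit_cost Lj Li a b t1 + transit_cost Lj Li a b t2"
    using transit_cost_midpoint[OF t, of a a b b] by simp
  moreover have "transit_cost Lj Li a b t1 \<le> transit_cost Lj Li a b ((t1+t2)/2)"
    and "transit_cost Lj Li a b t2 \<le> transit_cost Lj Li a b ((t1+t2)/2)"
    using t1 t2 mid by (auto simp: optimal_transit_def)
  ultimately show False using penalty by linarith
qed

lemma transit_cost_lower_bound:
  assumes t: "\<tau> \<in> {0<..<1}"
  shows "min (Lj 0) (Li 0) - Lj' 0 * a + Li' 0 * b + \<gamma>/2 * a\<^sup>2 / \<tau> + \<gamma>/2 * b\<^sup>2 / (1-\<tau>)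
         \<le> transit_cost Lj Li a b \<tau>"
proof -
  have "\<tau> * Lj 0 + Lj' 0 * (-a) + \<gamma>/2 * (-a)\<^sup>2 / \<tau> \<le> \<tau> * Lj ((-a)/\<tau>)"
    using t by (intro perspective_above_tangent[OF Lj_convex Lj_deriv]) auto
  moreover have "(1-\<tau>) * Li 0 + Li' 0 * b + \<gamma>/2 * b\<^sup>2 / (1-\<tau>) \<le> (1-\<tau>) * Li (b/(1-\<tau>))"
    using t by (intro perspective_above_tangent[OF Li_convex Li_deriv]) auto
  moreover have "min (Lj 0) (Li 0) \<le> \<tau> * Lj 0 + (1-\<tau>) * Li 0"
  proof -
    have "\<tau> * min (Lj 0) (Li 0) \<le> \<tau> * Lj 0" "(1-\<tau>) * min (Lj 0) (Li 0) \<le> (1-\<tau>) * Li 0"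
      using t by (auto intro: mult_left_mono)
    then show ?thesis by (simp add: algebra_simps)
  qed
  ultimately show ?thesis unfolding transit_cost_def by simp
qed

lemma transit_cost_continuous: "continuous_on {0<..<1} (transit_cost Lj Li a b)"
proof (rule continuous_at_imp_continuous_on, intro ballI)
  fix \<tau> :: real assume "\<tau> \<in> {0<..<1}"
  then have "\<tau> \<noteq> 0" "1 - \<tau> \<noteq> 0" by auto
  moreover have "isCont Lj z" "isCont Li z" for z
    using Lj_deriv Li_deriv by (blast intro: DERIV_isCont)+
  ultimately show "isCont (transit_cost Lj Li a b) \<tau>"
    unfolding transit_cost_def[abs_def]
    by (intro continuous_intros isCont_o2[where f="\<lambda>\<tau>. - a / \<tau>" and g=Lj]
          isCont_o2[where f="\<lambda>\<tau>. b / (1 - \<tau>)" and g=Li]) auto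
qed

(* Existence of an optimal transit time, from coercivity and continuity. *)
lemma optimal_transit_exists:
  assumes a: "a > 0" and b: "b > 0"
  shows "\<exists>\<tau>. optimal_transit Lj Li a b \<tau>"
proof -
  define C where "C = min (Lj 0) (Li 0) - Lj' 0 * a + Li' 0 * b"
  define A where "A = \<gamma>/2 * a\<^sup>2"
  define B where "B = \<gamma>/2 * b\<^sup>2"
  define K where "K = max 1 (transit_cost Lj Li a b (1/2) - C)"
  define \<delta> where "\<delta> = min (1/2) (min (A/K) (B/K))"
  have AB: "A > 0" "B > 0" using a b \<gamma>_pos by (auto simp: A_def B_def)
  have K: "K > 0" "transit_cost Lj Li a b (1/2) \<le> C + K" by (auto simp: K_def)
  have \<delta>: "0 < \<delta>" "\<delta> \<le> 1/2"
    unfolding \<delta>_def using AB K by (simp_all add: min_def)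

  have outer: "transit_cost Lj Li a b (1/2) < transit_cost Lj Li a b \<tau>"
    if t: "\<tau> \<in> {0<..<1}" "\<tau> \<notin> {\<delta>..1-\<delta>}" for \<tau>
  proof -
    have low: "C + A/\<tau> + B/(1-\<tau>) \<le> transit_cost Lj Li a b \<tau>"
      using transit_cost_lower_bound[OF t(1), of a b] by (simp add: A_def B_def C_def)
    have pos: "A/\<tau> > 0" "B/(1-\<tau>) > 0" using t AB by auto
    consider "\<tau> < A/K" | "1 - \<tau> < B/K" using t by (force simp: \<delta>_def)
    then have "K < A/\<tau> \<or> K < B/(1-\<tau>)"
      using t K by cases (auto simp: field_simps)
    then show ?thesis using low pos K by linarith
  qed
  show ?thesis
    using continuous_attains_inf_unit_interval[OF transit_cost_continuous \<delta> outer]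
    unfolding optimal_transit_def by blast
qed

lemma transit_time_iff:
  assumes "a > 0" "b > 0"
  shows "optimal_transit Lj Li a b \<tau> \<longleftrightarrow> \<tau> = transit_time Lj Li a b"
proof -
  obtain t where t: "optimal_transit Lj Li a b t" using optimal_transit_exists[OF assms] by blast
  then have "transit_time Lj Li a b = t"
    unfolding transit_time_def using optimal_transit_unique[OF assms(1)] by blast
  then show ?thesis using t optimal_transit_unique[OF assms(1) t] by blast
qed

lemma min_transit_cost_le:
  assumes "a > 0" "b > 0" "\<sigma> \<in> {0<..<1}"
  shows "min_transit_cost Lj Li a b \<le> transit_cost Lj Li a b \<sigma>"
  using transit_time_iff[OF assms(1,2)] assms(3)
  unfolding min_transit_cost_def optimal_transit_def by blast

lemma transit_time_in_unit_interval:
  assumes "a > 0" "b > 0"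
  shows "transit_time Lj Li a b \<in> {0<..<1}"
  using transit_time_iff[OF assms] unfolding optimal_transit_def by blast

lemma min_transit_cost_midpoint:
  assumes pos: "a1 > 0" "b1 > 0" "a2 > 0" "b2 > 0"
  shows "2 * min_transit_cost Lj Li ((a1+a2)/2) ((b1+b2)/2)
         \<le> min_transit_cost Lj Li a1 b1 + min_transit_cost Lj Li a2 b2"
proof -
  define t1 where "t1 = transit_time Lj Li a1 b1"
  define t2 where "t2 = transit_time Lj Li a2 b2"
  have t: "t1 \<in> {0<..<1}" "t2 \<in> {0<..<1}"
    unfolding t1_def t2_def
    using transit_time_in_unit_interval[OF pos(1,2)] transit_time_in_unit_interval[OF pos(3,4)] .
  have "min_transit_cost Lj Li ((a1+a2)/2) ((b1+b2)/2)
        \<le> transit_cost Lj Li ((a1+a2)/2) ((b1+b2)/2) ((t1+t2)/2)"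
    using pos t by (intro min_transit_cost_le) auto
  moreover have "0 \<le> \<gamma>/2 * (t1*t2/(t1+t2)) * (a1/t1 - a2/t2)\<^sup>2" using t \<gamma>_pos by auto
  ultimately show ?thesis
    using transit_cost_midpoint[OF t, of a1 a2 b1 b2]
    unfolding min_transit_cost_def t1_def t2_def by linarith
qed

lemma transit_cost_has_derivative:
  assumes t: "\<tau> \<in> {0<..<1}"
  shows "((\<lambda>(a, b). transit_cost Lj Li a b \<tau>) has_derivative
           (\<lambda>(h, k). h * (- Lj' (-s/\<tau>)) + k * Li' (r/(1-\<tau>)))) (at (s, r))"
proof -
  have "((\<lambda>q::real\<times>real. - fst q / \<tau>) has_derivative (\<lambda>q. - fst q / \<tau>)) (at (s, r))"
    and "((\<lambda>q::real\<times>real. snd q / (1-\<tau>)) has_derivative (\<lambda>q. snd q / (1-\<tau>))) (at (s, r))"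
    using t by (auto intro!: derivative_eq_intros)
  from DERIV_compose_FDERIV[OF Lj_deriv this(1)] DERIV_compose_FDERIV[OF Li_deriv this(2)]
  have "((\<lambda>q. Lj (- fst q / \<tau>)) has_derivative (\<lambda>q. (- fst q / \<tau>) * Lj' (-s/\<tau>))) (at (s, r))"
    and "((\<lambda>q. Li (snd q / (1-\<tau>))) has_derivative (\<lambda>q. (snd q / (1-\<tau>)) * Li' (r/(1-\<tau>)))) (at (s, r))"
    by simp_all
  then have deriv: "((\<lambda>q. \<tau> * Lj (- fst q / \<tau>) + (1-\<tau>) * Li (snd q / (1-\<tau>))) has_derivative
      (\<lambda>q. \<tau> * ((- fst q / \<tau>) * Lj' (-s/\<tau>)) + (1-\<tau>) * ((snd q / (1-\<tau>)) * Li' (r/(1-\<tau>))))) (at (s, r))"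
    by (intro has_derivative_add has_derivative_mult_right)
  have split: "(\<lambda>(a, b). transit_cost Lj Li a b \<tau>) = (\<lambda>q. \<tau> * Lj (- fst q / \<tau>) + (1-\<tau>) * Li (snd q / (1-\<tau>)))"
    by (auto simp: transit_cost_def fun_eq_iff)
  show ?thesis
    unfolding split by (rule has_derivative_eq_rhs[OF deriv]) (use t in \<open>auto simp: fun_eq_iff\<close>)
qed

(* The derivative of the optimal cost is that of the cost at the frozen optimal time. *)
lemma min_transit_cost_has_derivative:
  assumes s: "s > 0" and r: "r > 0"
  shows "((\<lambda>(a, b). min_transit_cost Lj Li a b) has_derivative
           (\<lambda>(h, k). h * (- Lj' (-s / transit_time Lj Li s r))
                    + k * Li' (r / (1 - transit_time Lj Li s r)))) (at (s, r))"
proof (rule has_derivative_touching_above)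
  define T where "T = transit_time Lj Li s r"
  have T: "T \<in> {0<..<1}" unfolding T_def using transit_time_in_unit_interval[OF s r] .
  show "((\<lambda>(a, b). transit_cost Lj Li a b T) has_derivative
          (\<lambda>(h, k). h * (- Lj' (-s / T)) + k * Li' (r / (1 - T)))) (at (s, r))"
    using transit_cost_has_derivative[OF T] .
  show "min s r > 0" using s r by simp
  have pos: "s + fst h > 0" "r + snd h > 0" "s - fst h > 0" "r - snd h > 0"
    if "norm h < min s r" for h :: "real \<times> real"
    using that norm_fst_le[of "fst h" "snd h"] norm_snd_le[of "snd h" "fst h"] by auto
  fix h :: "real \<times> real" assume h: "norm h < min s r"
  show "(\<lambda>(a, b). min_transit_cost Lj Li a b) ((s, r) + h) \<le> (\<lambda>(a, b). transit_cost Lj Li a b T) ((s, r) + h)"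
    using min_transit_cost_le[OF pos(1,2)[OF h] T] by (simp add: case_prod_beta)
  show "2 * (\<lambda>(a, b). min_transit_cost Lj Li a b) (s, r)
        \<le> (\<lambda>(a, b). min_transit_cost Lj Li a b) ((s, r) + h) + (\<lambda>(a, b). min_transit_cost Lj Li a b) ((s, r) - h)"
    using min_transit_cost_midpoint[OF pos[OF h]] by (simp add: case_prod_beta)
next
  show "(\<lambda>(a, b). min_transit_cost Lj Li a b) (s, r)
        = (\<lambda>(a, b). transit_cost Lj Li a b (transit_time Lj Li s r)) (s, r)"
    by (simp add: min_transit_cost_def)
qed

end

lemma branch_scale:
  assumes inj: "inj_on e {1..N}" and unit: "\<forall>k\<in>{1..N}. norm (e k) = 1"
    and j: "j \<in> {1..N}" and a: "a > 0"
  shows "branch e N (a *\<^sub>R e j) = j"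
  unfolding branch_def
proof (rule the_equality)
  show "j \<in> {1..N} \<and> (\<exists>t\<ge>0. a *\<^sub>R e j = t *\<^sub>R e j)" using j a less_imp_le by blast
next
  fix k assume k: "k \<in> {1..N} \<and> (\<exists>t\<ge>0. a *\<^sub>R e j = t *\<^sub>R e k)"
  then obtain t where t: "t \<ge> 0" "a *\<^sub>R e j = t *\<^sub>R e k" by blast
  then have "norm (a *\<^sub>R e j) = norm (t *\<^sub>R e k)" by simp
  then have "a = t" using unit j k a t(1) by simp
  then have "e j = e k" using t(2) a by simp
  then show "k = j" using inj j k by (metis inj_onD)
qed

lemma E1_plus_E2_branches:
  assumes inj: "inj_on e {1..N}" and unit: "\<forall>k\<in>{1..N}. norm (e k) = 1"
    and ij: "i \<in> {1..N}" "j \<in> {1..N}" and a: "a > 0" and b: "b > 0"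
    and t: "\<tau> \<in> {0..1}"
  shows "E1 e N L \<tau> (a *\<^sub>R e j) + E2 e N L \<tau> (b *\<^sub>R e i)
           = (if \<tau> \<in> {0<..<1} then ereal (transit_cost (L j) (L i) a b \<tau>) else \<infinity>)"
proof -
  have "norm (a *\<^sub>R e j) = a" "norm (b *\<^sub>R e i) = b" using unit ij a b by simp_all
  moreover have "branch e N (a *\<^sub>R e j) = j" "branch e N (b *\<^sub>R e i) = i"
    using branch_scale[OF inj unit] ij a b by simp_all
  ultimately show ?thesis
    using t a b unfolding E1_def E2_def transit_cost_def by auto
qed

lemma D_implicit_branches:
  assumes inj: "inj_on e {1..N}" and unit: "\<forall>k\<in>{1..N}. norm (e k) = 1"
    and ij: "i \<in> {1..N}" "j \<in> {1..N}" and a: "a > 0" and b: "b > 0"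
    and opt: "optimal_transit (L j) (L i) a b \<tau>"
  shows "D_implicit e N L (a *\<^sub>R e j) (b *\<^sub>R e i) = ereal (transit_cost (L j) (L i) a b \<tau>)"
  unfolding D_implicit_def
proof (rule antisym)
  have "\<tau> \<in> {0..1}" "\<tau> \<in> {0<..<1}" using opt by (auto simp: optimal_transit_def)
  then show "(INF \<sigma>\<in>{0..1}. E1 e N L \<sigma> (a *\<^sub>R e j) + E2 e N L \<sigma> (b *\<^sub>R e i))
             \<le> ereal (transit_cost (L j) (L i) a b \<tau>)"
    by (intro INF_lower2[of \<tau>]) (simp_all add: E1_plus_E2_branches[OF inj unit ij a b])
  show "ereal (transit_cost (L j) (L i) a b \<tau>)
        \<le> (INF \<sigma>\<in>{0..1}. E1 e N L \<sigma> (a *\<^sub>R e j) + E2 e N L \<sigma> (b *\<^sub>R e i))"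
    using opt by (intro INF_greatest) (simp add: E1_plus_E2_branches[OF inj unit ij a b] optimal_transit_def)
qed

theorem mainTheorem19:
  fixes N :: nat and e :: "nat \<Rightarrow> real^2"
    and L L' L'' :: "nat \<Rightarrow> real \<Rightarrow> real" and \<gamma> :: real
    and i j :: nat and s r :: real
  assumes N: "N \<ge> 1"
    and e_inj: "inj_on e {1..N}"
    and e_unit: "\<forall>k\<in>{1..N}. norm (e k) = 1"
    and \<gamma>: "\<gamma> > 0"
    and L1: "\<forall>k\<in>{1..N}. \<forall>z. (L k has_real_derivative L' k z) (at z)"
    and L2: "\<forall>k\<in>{1..N}. \<forall>z. (L' k has_real_derivative L'' k z) (at z)"
    and L2cont: "\<forall>k\<in>{1..N}. continuous_on UNIV (L'' k)"
    and L2ge: "\<forall>k\<in>{1..N}. \<forall>z. L'' k z \<ge> \<gamma>"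
    and ij: "i \<in> {1..N}" "j \<in> {1..N}"
    and sr: "s > 0" "r > 0"
  shows "(\<exists>!\<tau>. \<tau> \<in> {0<..<1} \<and>
            D_implicit e N L (s *\<^sub>R e j) (r *\<^sub>R e i)
              = E1 e N L \<tau> (s *\<^sub>R e j) + E2 e N L \<tau> (r *\<^sub>R e i))
       \<and> (let T = (THE \<tau>. \<tau> \<in> {0<..<1} \<and>
                      D_implicit e N L (s *\<^sub>R e j) (r *\<^sub>R e i)
                        = E1 e N L \<tau> (s *\<^sub>R e j) + E2 e N L \<tau> (r *\<^sub>R e i))
          in ((\<lambda>(a, b). real_of_ereal (D_implicit e N L (a *\<^sub>R e j) (b *\<^sub>R e i)))
               has_derivative
               (\<lambda>(h, k). h * (- L' j (- s / T)) + k * L' i (r / (1 - T)))) (at (s, r)))"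
proof -
  have cvx: "convex_on UNIV (\<lambda>z. L k z - \<gamma>/2 * z\<^sup>2)" if "k \<in> {1..N}" for k
    by (rule convex_of_second_derivative_ge) (use L1 L2 L2ge that in auto)
  interpret strongly_convex_pair "L j" "L' j" "L i" "L' i" \<gamma>
    using \<gamma> L1 ij cvx by unfold_locales blast+
  have D: "D_implicit e N L (a *\<^sub>R e j) (b *\<^sub>R e i) = ereal (min_transit_cost (L j) (L i) a b)"
    if "a > 0" "b > 0" for a b
    using D_implicit_branches[OF e_inj e_unit ij that] transit_time_iff[OF that]
    unfolding min_transit_cost_def by blast
  have attained: "(\<tau> \<in> {0<..<1} \<and> D_implicit e N L (s *\<^sub>R e j) (r *\<^sub>R e i)
                    = E1 e N L \<tau> (s *\<^sub>R e j) + E2 e N L \<tau> (r *\<^sub>R e i))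
                  \<longleftrightarrow> \<tau> = transit_time (L j) (L i) s r" for \<tau>
    using D[OF sr] E1_plus_E2_branches[OF e_inj e_unit ij sr, of \<tau>] transit_time_iff[OF sr, of \<tau>]
      min_transit_cost_le[OF sr] transit_time_in_unit_interval[OF sr]
    by (auto simp: optimal_transit_def min_transit_cost_def)
  have "((\<lambda>(a, b). real_of_ereal (D_implicit e N L (a *\<^sub>R e j) (b *\<^sub>R e i))) has_derivative
          (\<lambda>(h, k). h * (- L' j (- s / transit_time (L j) (L i) s r))
                   + k * L' i (r / (1 - transit_time (L j) (L i) s r)))) (at (s, r))"
    by (rule has_derivative_transform_within_open[OF min_transit_cost_has_derivative[OF sr],
          of "{0<..} \<times> {0<..}"]) (use sr D in \<open>auto simp: open_Times\<close>)
  then show ?thesis unfolding attained Let_def by simp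
qed

end
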